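(* Let $r,p\ge0$ be integers and $a_{-r},\dots,a_p$ real coefficients whose symbol $\gamma(\xi)=\sum_{k=-r}^{p}a_ke^{ik\xi}$ satisfies $|\gamma(\xi)|\le1$ for all $\xi\in\mathbb R$, and such that $\sum_{k=-r}^pa_k=1$ and $\sum_{k=-r}^p k a_k=-\lambda$ for some $\lambda>0$. Then $|a_0|<1$. *)

theory Defs
  imports "HOL-Analysis.Analysis"
begin

definition symbol :: "nat \<Rightarrow> nat \<Rightarrow> (int \<Rightarrow> real) \<Rightarrow> real \<Rightarrow> complex" where
  "symbol r p a \<xi> = (\<Sum>k = - int r..int p. complex_of_real (a k) * exp (\<i> * complex_of_real (real_of_int k * \<xi>)))"

end

theory Submission imports Defs begin

text \<open>Sampling the symbol at the \<open>N\<close>-th roots of unity with \<open>N > r + p\<close> gives the discrete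
  Parseval identity \<open>\<Sum>\<^sub>j |\<gamma>(2\<pi>j/N)|\<^sup>2 = N \<Sum>\<^sub>k a\<^sub>k\<^sup>2\<close>, so \<open>|\<gamma>| \<le> 1\<close> forces \<open>\<Sum>\<^sub>k a\<^sub>k\<^sup>2 \<le> 1\<close>.
  If \<open>|a\<^sub>0| \<ge> 1\<close>, every other coefficient must vanish, and then the first moment
  \<open>\<Sum>\<^sub>k k a\<^sub>k\<close> is \<open>0\<close>, contradicting \<open>\<lambda> > 0\<close>.\<close>

lemma sum_roots_of_unity_power_eq_0:
  fixes m :: int and N :: nat
  assumes "\<not> int N dvd m"
  shows "(\<Sum>j<N. exp (\<i> * complex_of_real (real_of_int m * (2 * pi * real j / real N)))) = 0"
proof (cases "N = 0")
  case False
  then have N0: "N > 0" by simp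
  define z where "z = exp (\<i> * complex_of_real (real_of_int m * 2 * pi / real N))"
  have powers: "exp (\<i> * complex_of_real (real_of_int m * (2 * pi * real j / real N))) = z ^ j" for j
  proof -
    have "\<i> * complex_of_real (real_of_int m * (2 * pi * real j / real N))
        = of_nat j * (\<i> * complex_of_real (real_of_int m * 2 * pi / real N))"
      by (simp add: field_simps)
    then show ?thesis unfolding z_def by (simp only: exp_of_nat_mult)
  qed
  have "z ^ N = exp (of_nat N * (\<i> * complex_of_real (real_of_int m * 2 * pi / real N)))"
    unfolding z_def by (simp only: exp_of_nat_mult)
  also have "of_nat N * (\<i> * complex_of_real (real_of_int m * 2 * pi / real N))
           = \<i> * (of_int m * (of_real pi * 2))"
    using N0 by (simp add: field_simps)
  finally have zN: "z ^ N = 1" by simp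
  have "z \<noteq> 1"
  proof
    assume "z = 1"
    then obtain n :: int where "real_of_int m * 2 * pi / real N = of_int (2 * n) * pi"
      unfolding z_def exp_eq_1 by auto
    then have "real_of_int m = real_of_int (n * int N)" using N0 by (simp add: field_simps)
    then have "m = n * int N" by (simp only: of_int_eq_iff)
    then show False using assms by simp
  qed
  then show ?thesis unfolding powers using geometric_sum[of z N] zN by simp
qed simp

lemma cmod_symbol_squared:
  "complex_of_real ((cmod (symbol r p a \<xi>))\<^sup>2) =
   (\<Sum>k = - int r..int p. \<Sum>l = - int r..int p.
      complex_of_real (a k * a l) * exp (\<i> * complex_of_real (real_of_int (k - l) * \<xi>)))"
proof -
  have cnj_symbol: "cnj (symbol r p a \<xi>) =
      (\<Sum>l = - int r..int p. complex_of_real (a l) * exp (- (\<i> * complex_of_real (real_of_int l * \<xi>))))"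
    unfolding symbol_def by (simp add: exp_cnj)
  have exp_diff: "exp (\<i> * complex_of_real (real_of_int k * \<xi>)) * exp (- (\<i> * complex_of_real (real_of_int l * \<xi>)))
       = exp (\<i> * complex_of_real (real_of_int (k - l) * \<xi>))" for k l :: int
    by (simp add: exp_add[symmetric] algebra_simps)
  have "complex_of_real ((cmod (symbol r p a \<xi>))\<^sup>2) = symbol r p a \<xi> * cnj (symbol r p a \<xi>)"
    by (rule complex_norm_square)
  also have "\<dots> = (\<Sum>k = - int r..int p. \<Sum>l = - int r..int p.
      complex_of_real (a k * a l) * (exp (\<i> * complex_of_real (real_of_int k * \<xi>)) *
                                     exp (- (\<i> * complex_of_real (real_of_int l * \<xi>)))))"
    unfolding cnj_symbol by (simp add: symbol_def sum_product algebra_simps)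
  finally show ?thesis by (simp only: exp_diff)
qed

lemma discrete_parseval_symbol:
  assumes "N > r + p"
  shows "(\<Sum>j<N. (cmod (symbol r p a (2 * pi * real j / real N)))\<^sup>2) =
         real N * (\<Sum>k = - int r..int p. (a k)\<^sup>2)"
proof -
  define K where "K = {- int r..int p}"
  have orthogonality: "(\<Sum>j<N. exp (\<i> * complex_of_real (real_of_int (k - l) * (2 * pi * real j / real N))))
      = (if k = l then of_nat N else 0)" if "k \<in> K" "l \<in> K" for k l
  proof (cases "k = l")
    case False
    have "0 < \<bar>k - l\<bar>" "\<bar>k - l\<bar> < int N" using False that assms unfolding K_def by auto
    then have "\<not> int N dvd k - l" by (metis dvd_abs_iff zdvd_imp_le not_le)
    then show ?thesis using sum_roots_of_unity_power_eq_0 False by presburger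
  qed simp
  have "complex_of_real (\<Sum>j<N. (cmod (symbol r p a (2 * pi * real j / real N)))\<^sup>2)
     = (\<Sum>j<N. \<Sum>k\<in>K. \<Sum>l\<in>K. complex_of_real (a k * a l) *
          exp (\<i> * complex_of_real (real_of_int (k - l) * (2 * pi * real j / real N))))"
    unfolding K_def of_real_sum cmod_symbol_squared ..
  also have "\<dots> = (\<Sum>k\<in>K. \<Sum>l\<in>K. complex_of_real (a k * a l) *
      (\<Sum>j<N. exp (\<i> * complex_of_real (real_of_int (k - l) * (2 * pi * real j / real N)))))"
    by (simp add: sum.swap[of _ "{..<N}"] sum_distrib_left)
  also have "\<dots> = (\<Sum>k\<in>K. \<Sum>l\<in>K. complex_of_real (a k * a l) * (if k = l then of_nat N else 0))"
    by (intro sum.cong refl, subst orthogonality) auto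
  also have "\<dots> = (\<Sum>k\<in>K. complex_of_real (a k * a k) * of_nat N)"
    by (simp add: if_distrib sum.delta K_def cong: if_cong)
  also have "\<dots> = complex_of_real (real N * (\<Sum>k\<in>K. (a k)\<^sup>2))"
    by (simp add: sum_distrib_left power2_eq_square mult.commute)
  finally show ?thesis unfolding K_def of_real_eq_iff .
qed

lemma sum_squares_le_1_if_symbol_bounded:
  assumes "\<And>\<xi>. cmod (symbol r p a \<xi>) \<le> 1"
  shows "(\<Sum>k = - int r..int p. (a k)\<^sup>2) \<le> 1"
proof -
  define N where "N = r + p + 1"
  have "real N * (\<Sum>k = - int r..int p. (a k)\<^sup>2)
      = (\<Sum>j<N. (cmod (symbol r p a (2 * pi * real j / real N)))\<^sup>2)"
    by (rule discrete_parseval_symbol[symmetric]) (simp add: N_def)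
  also have "\<dots> \<le> (\<Sum>j<N. 1)"
    by (intro sum_mono) (simp add: assms power_le_one)
  also have "\<dots> = real N * 1" by simp
  finally show ?thesis unfolding N_def by (simp only: mult_le_cancel_left_pos of_nat_0_less_iff)
qed

theorem lemma3p7:
  fixes r p :: nat and a :: "int \<Rightarrow> real" and lam :: real
  assumes stab: "\<And>\<xi>::real. cmod (symbol r p a \<xi>) \<le> 1"
    and cons: "(\<Sum>k = - int r..int p. a k) = 1"
    and hlam: "(\<Sum>k = - int r..int p. real_of_int k * a k) = - lam"
    and pos: "lam > 0"
  shows "\<bar>a 0\<bar> < 1"
proof (rule ccontr)
  assume "\<not> \<bar>a 0\<bar> < 1"
  then have a0: "(a 0)\<^sup>2 \<ge> 1" using one_le_power[of "\<bar>a 0\<bar>" 2] by simp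
  define K where "K = {- int r..int p}"
  have "(a 0)\<^sup>2 + (\<Sum>k\<in>K - {0}. (a k)\<^sup>2) \<le> 1"
    using sum_squares_le_1_if_symbol_bounded[OF stab] sum.remove[of K 0 "\<lambda>k. (a k)\<^sup>2"]
    unfolding K_def by simp
  then have "(\<Sum>k\<in>K - {0}. (a k)\<^sup>2) = 0"
    using a0 sum_nonneg[of "K - {0}" "\<lambda>k. (a k)\<^sup>2"] by simp
  then have "\<forall>k\<in>K - {0}. a k = 0" by (simp add: K_def sum_nonneg_eq_0_iff)
  then have "(\<Sum>k\<in>K. real_of_int k * a k) = 0" by (intro sum.neutral) auto
  then show False using hlam pos unfolding K_def by simp
qed

end
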